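(* Let $0<s<r<1$ and let $P$ be a compact packing of the plane by discs of radii $1,r,s$. If some $s$-disc of $P$ has a corona whose coding $w$ is one of 1rss, 11rss, 1rrss, 1srss, then $P$ contains an $s$-disc whose corona coding is neither $w$ nor ssssss.
   Context: A packing is a set of discs in the plane with pairwise disjoint interiors; it is compact if its contact graph (centers as vertices, edges between tangent discs) is a triangulation of the plane. An $x$-disc is a disc of radius $x$. The corona of a disc $D$ is the set of discs tangent to $D$; its coding is the cyclic word over $\{1,r,s\}$ listing the radii of these discs in angular order around $D$ (consecutive letters correspond to tangent discs), considered up to rotation and reversal. *)

theory Defs
  imports "HOL-Analysis.Analysis"
begin

type_synonym disc = "complex \<times> real"

definition ctr :: "disc \<Rightarrow> complex" where "ctr D = fst D"
definition rad :: "disc \<Rightarrow> real" where "rad D = snd D"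

definition packing :: "disc set \<Rightarrow> bool" where
  "packing P \<longleftrightarrow> (\<forall>D\<in>P. rad D > 0) \<and>
     (\<forall>D\<in>P. \<forall>E\<in>P. D \<noteq> E \<longrightarrow> cmod (ctr D - ctr E) \<ge> rad D + rad E)"

definition tangent :: "disc \<Rightarrow> disc \<Rightarrow> bool" where
  "tangent D E \<longleftrightarrow> D \<noteq> E \<and> cmod (ctr D - ctr E) = rad D + rad E"

definition corona :: "disc set \<Rightarrow> disc \<Rightarrow> disc set" where
  "corona P D = {E \<in> P. tangent D E}"

definition corona_list :: "disc set \<Rightarrow> disc \<Rightarrow> disc list \<Rightarrow> bool" where
  "corona_list P D L \<longleftrightarrow> set L = corona P D \<and>
     sorted_wrt (\<lambda>E F. Arg (ctr E - ctr D) < Arg (ctr F - ctr D)) L"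

text \<open>Compact packing: the contact graph is a triangulation of the plane, i.e.
  around every disc D the tangent discs, in angular order, form a closed cycle of
  consecutively tangent discs surrounding D (each consecutive counterclockwise
  angular step lies strictly between 0 and pi).\<close>
definition compact_packing :: "disc set \<Rightarrow> bool" where
  "compact_packing P \<longleftrightarrow> packing P \<and>
     (\<forall>D\<in>P. \<exists>L. corona_list P D L \<and> L \<noteq> [] \<and>
        (\<forall>i<length L. tangent (L ! i) (L ! ((i + 1) mod length L)) \<and>
           Im (cnj (ctr (L ! i) - ctr D) * (ctr (L ! ((i + 1) mod length L)) - ctr D)) > 0))"

definition cyclic_equiv :: "'a list \<Rightarrow> 'a list \<Rightarrow> bool" where
  "cyclic_equiv u v \<longleftrightarrow> (\<exists>k. u = rotate k v \<or> u = rotate k (rev v))"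

definition has_coding :: "disc set \<Rightarrow> disc \<Rightarrow> real list \<Rightarrow> bool" where
  "has_coding P D w \<longleftrightarrow> (\<exists>L. corona_list P D L \<and> cyclic_equiv (map rad L) w)"

end

theory Submission
  imports Defs
begin

text \<open>
  In each of the four words w the two letters s are adjacent, and the
  letters around this pair are 1 and r. So the s-disc D has two consecutive
  s-neighbours S1, S2, preceded by A and followed by B with
  {rad A, rad B} = {1, r}. Suppose both S1 and S2 had coding w. Let X be the
  disc preceding S2 around S1. Around S1 the corona reads X, S2, D, A and
  around S2 it reads B, D, S1, X; in both codings the pair of s-letters is
  flanked by 1 and r, so rad X differs from both rad A and rad B, which is
  impossible with only two values available. Hence S1 or S2 has a coding
  other than w, and since it touches A or B it is not surrounded by six
  s-discs either.

  The geometric input is that three mutually tangent discs C, X, Y, two of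
  which have the smallest radius s, leave no room for another disc of the
  packing between X and Y around C: X and Y are consecutive in the corona
  of C.
\<close>

section \<open>Orientation and angles\<close>

definition ccw :: "complex \<Rightarrow> complex \<Rightarrow> complex \<Rightarrow> bool" where
  "ccw a b c \<longleftrightarrow> Im (cnj (b - a) * (c - a)) > 0"

lemma ccw_rotate: "ccw a b c \<longleftrightarrow> ccw b c a"
  by (simp add: ccw_def algebra_simps)

lemma ccw_irrefl: "\<not> ccw a b b"
  by (simp add: ccw_def algebra_simps)

lemma Im_cnj_mult_eq_sin_Arg: "Im (cnj x * y) = cmod x * cmod y * sin (Arg y - Arg x)"
proof -
  have "cnj x * y = rcis (cmod x) (- Arg x) * rcis (cmod y) (Arg y)"
    by (simp add: rcis_cnj rcis_cmod_Arg)
  also have "\<dots> = rcis (cmod x * cmod y) (Arg y - Arg x)"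
    by (simp add: rcis_mult)
  finally show ?thesis by simp
qed

lemma ccw_iff_sin_Arg:
  assumes "b \<noteq> a" "c \<noteq> a"
  shows "ccw a b c \<longleftrightarrow> sin (Arg (c - a) - Arg (b - a)) > 0"
proof -
  have "cmod (b - a) * cmod (c - a) > 0" using assms by simp
  then show ?thesis
    unfolding ccw_def Im_cnj_mult_eq_sin_Arg by (metis mult_pos_pos zero_less_mult_pos)
qed

definition cyclically_between :: "real \<Rightarrow> real \<Rightarrow> real \<Rightarrow> bool" where
  "cyclically_between a g y \<longleftrightarrow> (a < g \<and> g < y) \<or> (y < a \<and> a < g) \<or> (g < y \<and> y < a)"

lemma sin_pos_cyclically_between:
  fixes a g y :: real
  assumes "-pi < a" "a \<le> pi" "-pi < g" "g \<le> pi" "-pi < y" "y \<le> pi"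
    and sin_pos: "sin (y - a) > 0" and between: "cyclically_between a g y"
  shows "sin (g - a) > 0 \<and> sin (y - g) > 0"
proof -
  have sin_shift: "sin x > 0" if "-2*pi < x" "x < -pi" for x :: real
    using sin_gt_zero[of "x + 2*pi"] that by (simp add: sin_add)
  have wrap: "y - a < -pi" if "y < a"
  proof (rule ccontr)
    assume "\<not> y - a < -pi"
    moreover have "sin (y - a) = - sin (a - y)" by (metis minus_diff_eq sin_minus)
    ultimately show False using sin_ge_zero[of "a - y"] sin_pos that by simp
  qed
  from between consider "a < g" "g < y" | "y < a" "a < g" | "g < y" "y < a"
    unfolding cyclically_between_def by blast
  then show ?thesis
  proof cases
    case 1
    have "y - a < pi"
      using sin_le_zero[of "y - a"] sin_pos 1 assms(1-6) by fastforce
    then show ?thesis using 1 sin_gt_zero[of "g - a"] sin_gt_zero[of "y - g"] by auto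
  next
    case 2
    then show ?thesis using wrap assms(1-6) sin_gt_zero[of "g - a"] sin_shift[of "y - g"] by auto
  next
    case 3
    then show ?thesis using wrap assms(1-6) sin_shift[of "g - a"] sin_gt_zero[of "y - g"] by auto
  qed
qed

section \<open>Discs around a tangent triangle\<close>

lemma norm_convex_comb_sq:
  fixes x y c :: complex and t :: real
  shows "(cmod (of_real t * x + of_real (1 - t) * y - c))\<^sup>2 =
    t * (cmod (x - c))\<^sup>2 + (1 - t) * (cmod (y - c))\<^sup>2 - t * (1 - t) * (cmod (x - y))\<^sup>2"
  unfolding cmod_power2 by (simp add: algebra_simps power2_eq_square)

lemma Im_cnj_cramer:
  fixes x y z :: complex
  shows "of_real (Im (cnj x * y)) * z = of_real (Im (cnj z * y)) * x + of_real (Im (cnj x * z)) * y"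
  by (simp add: complex_eq_iff algebra_simps)

lemma tangent_triangle_no_disc_inside:
  fixes A B C p :: complex and a b c rA rB rC rG :: real
  assumes weights: "a \<ge> 0" "b \<ge> 0" "c \<ge> 0" "a + b + c = 1"
    and p: "p = of_real a * A + of_real b * B + of_real c * C"
    and tangent: "cmod (A - B) = rA + rB" "cmod (A - C) = rA + rC" "cmod (B - C) = rB + rC"
    and disjoint: "cmod (p - A) \<ge> rA + rG" "cmod (p - B) \<ge> rB + rG" "cmod (p - C) \<ge> rC + rG"
    and radii: "rA \<le> rG" "rB \<le> rG" "rA > 0" "rB > 0" "rC > 0"
  shows False
proof -
  have c: "c = 1 - a - b" using weights(4) by simp
  have "p - C = of_real a * (A - C) + of_real b * (B - C)"
    by (simp add: p c algebra_simps)
  then have "cmod (p - C) \<le> a * cmod (A - C) + b * cmod (B - C)"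
    using norm_triangle_ineq[of "of_real a * (A - C)" "of_real b * (B - C)"] weights
    by (simp add: norm_mult)
  then have "rC + rG \<le> a * (rA + rC) + b * (rB + rC)"
    using disjoint tangent by simp
  also have "\<dots> \<le> (a + b) * (rG + rC)"
    using weights radii mult_left_mono[of rA rG a] mult_left_mono[of rB rG b]
    by (simp add: algebra_simps)
  also have "\<dots> = rG + rC - c * (rG + rC)"
    using weights(4) by (simp add: c algebra_simps)
  finally have "c * (rG + rC) \<le> 0" by simp
  moreover have "rG + rC > 0" using radii by simp
  ultimately have "c = 0" using weights(3) by (simp add: mult_le_0_iff)
  have a: "a = 1 - b" and b: "b = 1 - a" using weights(4) \<open>c = 0\<close> by simp_all
  have "p - A = of_real b * (B - A)" by (simp add: p \<open>c = 0\<close> a algebra_simps)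
  then have "cmod (p - A) = b * (rA + rB)"
    using weights tangent by (simp add: norm_mult norm_minus_commute)
  moreover have "p - B = of_real a * (A - B)" by (simp add: p \<open>c = 0\<close> b algebra_simps)
  then have "cmod (p - B) = a * (rA + rB)"
    using weights tangent by (simp add: norm_mult)
  ultimately have "cmod (p - A) + cmod (p - B) = (a + b) * (rA + rB)"
    by (simp add: algebra_simps)
  then show False
    using disjoint \<open>c = 0\<close> weights radii by simp
qed

lemma tangent_triangle_no_disc_across:
  fixes c x y g q :: complex and t \<sigma> rc rx ry rg :: real
  assumes t: "0 \<le> t" "t \<le> 1" and \<sigma>: "0 \<le> \<sigma>" "\<sigma> \<le> 1"
    and q_xy: "q = of_real t * x + of_real (1 - t) * y" and q_cg: "q = c + of_real \<sigma> * (g - c)"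
    and dist: "cmod (x - c) = rc + rx" "cmod (y - c) = rc + ry" "cmod (x - y) = rx + ry"
      "cmod (g - c) = rc + rg" "cmod (g - x) \<ge> rg + rx" "cmod (g - y) \<ge> rg + ry"
    and radii: "rc > 0" "rx > 0" "ry > 0"
  shows False
proof -
  have "q - x = of_real (1 - t) * (y - x)" "q - y = of_real t * (x - y)"
    by (simp_all add: q_xy algebra_simps)
  moreover have "q - c = of_real \<sigma> * (g - c)" "g - q = of_real (1 - \<sigma>) * (g - c)"
    by (simp_all add: q_cg algebra_simps)
  ultimately
  have dx: "cmod (q - x) = (1 - t) * (rx + ry)" and dy: "cmod (q - y) = t * (rx + ry)"
    and dc: "cmod (q - c) = \<sigma> * (rc + rg)" and dg: "cmod (g - q) = (1 - \<sigma>) * (rc + rg)"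
    using t \<sigma> dist by (simp_all add: norm_mult norm_minus_commute del: of_real_diff)
  have "cmod (x - c) \<le> cmod (q - x) + cmod (q - c)" "cmod (y - c) \<le> cmod (q - y) + cmod (q - c)"
    "cmod (g - x) \<le> cmod (g - q) + cmod (q - x)" "cmod (g - y) \<le> cmod (g - q) + cmod (q - y)"
    using norm_triangle_ineq[of "x - q" "q - c"] norm_triangle_ineq[of "y - q" "q - c"]
      norm_triangle_ineq[of "g - q" "q - x"] norm_triangle_ineq[of "g - q" "q - y"]
    by (simp_all add: norm_minus_commute)
  \<comment> \<open>all four triangle inequalities are tight, so q is the common tangency point of x, y and c\<close>
  then have qc: "cmod (q - c) = rc" and tx: "t * (rx + ry) = ry" and ty: "(1 - t) * (rx + ry) = rx"
    using dx dy dc dg dist by (simp_all add: algebra_simps)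
  have mean_sq: "t * rx\<^sup>2 + (1 - t) * ry\<^sup>2 = rx * ry"
  proof -
    have "(t * rx\<^sup>2 + (1 - t) * ry\<^sup>2) * (rx + ry) = (t * (rx + ry)) * rx\<^sup>2 + ((1 - t) * (rx + ry)) * ry\<^sup>2"
      by (simp add: algebra_simps)
    also have "\<dots> = (rx * ry) * (rx + ry)"
      unfolding tx ty by (simp add: power2_eq_square algebra_simps)
    finally show ?thesis using radii by simp
  qed
  have cross: "t * (1 - t) * (rx + ry)\<^sup>2 = rx * ry"
  proof -
    have "t * (1 - t) * (rx + ry)\<^sup>2 = (t * (rx + ry)) * ((1 - t) * (rx + ry))"
      by (simp add: power2_eq_square algebra_simps)
    then show ?thesis by (simp add: tx ty)
  qed
  have "t * rx + (1 - t) * ry > 0"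
    using t radii by (cases "t = 0") (auto intro: add_pos_nonneg)
  \<comment> \<open>but by Stewart's theorem the tangency point of x and y lies strictly outside c\<close>
  have "(cmod (q - c))\<^sup>2 = t * (rc + rx)\<^sup>2 + (1 - t) * (rc + ry)\<^sup>2 - t * (1 - t) * (rx + ry)\<^sup>2"
    using norm_convex_comb_sq[of t x y c] q_xy dist by simp
  also have "\<dots> = rc\<^sup>2 + 2 * rc * (t * rx + (1 - t) * ry)
      + (t * rx\<^sup>2 + (1 - t) * ry\<^sup>2) - t * (1 - t) * (rx + ry)\<^sup>2"
    by (simp add: power2_eq_square algebra_simps)
  also have "\<dots> > rc\<^sup>2"
    unfolding mean_sq cross using radii \<open>t * rx + (1 - t) * ry > 0\<close> by simp
  finally show False using qc by simp
qed

lemma tangent_triangle_no_disc_in_sector: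
  fixes c x y g :: complex and rc rx ry rg :: real
  assumes dist: "cmod (x - c) = rc + rx" "cmod (y - c) = rc + ry" "cmod (x - y) = rx + ry"
      "cmod (g - c) = rc + rg" "cmod (g - x) \<ge> rg + rx" "cmod (g - y) \<ge> rg + ry"
    and radii: "rc > 0" "rx > 0" "ry > 0" "rc \<le> rg" "rx \<le> rg \<or> ry \<le> rg"
    and orient: "ccw c x y" "ccw c x g" "ccw c g y"
  shows False
proof -
  define k where "k = Im (cnj (x - c) * (y - c))"
  define \<alpha> where "\<alpha> = Im (cnj (g - c) * (y - c))"
  define \<beta> where "\<beta> = Im (cnj (x - c) * (g - c))"
  have pos: "k > 0" "\<alpha> > 0" "\<beta> > 0"
    using orient by (simp_all add: ccw_def k_def \<alpha>_def \<beta>_def)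
  have cramer: "of_real k * (g - c) = of_real \<alpha> * (x - c) + of_real \<beta> * (y - c)"
    unfolding k_def \<alpha>_def \<beta>_def by (rule Im_cnj_cramer)
  show False
  proof (cases "\<alpha> + \<beta> \<le> k")
    case True
    \<comment> \<open>g lies in the triangle spanned by the centres c, x, y\<close>
    define a b e where "a = \<alpha> / k" and "b = \<beta> / k" and "e = 1 - a - b"
    have "a + b \<le> 1"
      unfolding a_def b_def add_divide_distrib[symmetric] using True pos by simp
    then have weights: "a \<ge> 0" "b \<ge> 0" "e \<ge> 0"
      using pos by (simp_all add: a_def b_def e_def)
    have "g - c = of_real k * (g - c) / of_real k"
      using pos by simp
    also have "\<dots> = of_real a * (x - c) + of_real b * (y - c)"
      unfolding cramer using pos by (simp add: a_def b_def field_simps)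
    finally have "g - c = of_real a * (x - c) + of_real b * (y - c)" .
    then have g: "g = of_real e * c + of_real a * x + of_real b * y"
      by (simp add: e_def algebra_simps)
    from radii(5) show False
    proof
      assume "rx \<le> rg"
      show False
        by (rule tangent_triangle_no_disc_inside[of e a b g c x y rc rx ry rg])
          (use weights g dist radii \<open>rx \<le> rg\<close> in \<open>auto simp: e_def norm_minus_commute algebra_simps\<close>)
    next
      assume "ry \<le> rg"
      show False
        by (rule tangent_triangle_no_disc_inside[of e b a g c y x rc ry rx rg])
          (use weights g dist radii \<open>ry \<le> rg\<close> in \<open>auto simp: e_def norm_minus_commute algebra_simps\<close>)
    qed
  next
    case False
    \<comment> \<open>the segment from c to g crosses the segment from x to y\<close>
    define \<sigma> t where "\<sigma> = k / (\<alpha> + \<beta>)" and "t = \<alpha> / (\<alpha> + \<beta>)"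
    have "0 \<le> t" "t \<le> 1" "0 \<le> \<sigma>" "\<sigma> \<le> 1"
      using pos False by (auto simp: t_def \<sigma>_def field_simps)
    moreover have "c + of_real \<sigma> * (g - c) = of_real t * x + of_real (1 - t) * y"
    proof -
      have nz: "complex_of_real \<alpha> + complex_of_real \<beta> \<noteq> 0"
        using pos by (metis of_real_add of_real_eq_0_iff add_pos_pos less_irrefl)
      have "c + of_real \<sigma> * (g - c) = c + of_real k * (g - c) / of_real (\<alpha> + \<beta>)"
        by (simp add: \<sigma>_def)
      also have "\<dots> = c + (of_real \<alpha> * (x - c) + of_real \<beta> * (y - c)) / of_real (\<alpha> + \<beta>)"
        by (simp only: cramer)
      also have "\<dots> = (of_real \<alpha> * x + of_real \<beta> * y) / (of_real \<alpha> + of_real \<beta>)"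
        using nz by (simp add: field_simps)
      also have "\<dots> = of_real \<alpha> / (of_real \<alpha> + of_real \<beta>) * x + of_real \<beta> / (of_real \<alpha> + of_real \<beta>) * y"
        by (simp add: add_divide_distrib)
      also have "\<dots> = of_real t * x + of_real (1 - t) * y"
      proof -
        have "1 - t = \<beta> / (\<alpha> + \<beta>)" using pos by (simp add: t_def field_simps)
        then show ?thesis by (simp add: t_def)
      qed
      finally show ?thesis .
    qed
    ultimately show False
      using tangent_triangle_no_disc_across[OF _ _ _ _ refl _ dist radii(1-3)] by metis
  qed
qed

section \<open>Cyclic lists and coronas\<close>

text \<open>Indices are read modulo the length; the value on the empty list is junk.\<close>

definition cyc_nth :: "'a list \<Rightarrow> nat \<Rightarrow> 'a" where
  "cyc_nth xs i = xs ! (i mod length xs)"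

lemma cyc_nth_eq_nth: "i < length xs \<Longrightarrow> cyc_nth xs i = xs ! i"
  by (simp add: cyc_nth_def)

lemma cyc_nth_mod_add: "cyc_nth xs (i mod length xs + j) = cyc_nth xs (i + j)"
  by (simp add: cyc_nth_def mod_add_left_eq)

lemma cyc_nth_add_length: "cyc_nth xs (i + length xs) = cyc_nth xs i"
  by (simp add: cyc_nth_def)

lemma cyc_nth_in_set: "xs \<noteq> [] \<Longrightarrow> cyc_nth xs i \<in> set xs"
  by (simp add: cyc_nth_def)

lemma cyc_nth_map: "xs \<noteq> [] \<Longrightarrow> cyc_nth (map f xs) i = f (cyc_nth xs i)"
  by (simp add: cyc_nth_def)

lemma cyc_nth_rotate: "xs \<noteq> [] \<Longrightarrow> cyc_nth (rotate k xs) i = cyc_nth xs (i + k)"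
  by (simp add: cyc_nth_def nth_rotate mod_add_right_eq add.commute)

lemma cyc_nth_rotate_shift:
  assumes "xs \<noteq> []"
  obtains i where "\<And>j. cyc_nth (rotate k xs) (i + j) = cyc_nth xs (p + j)"
proof -
  obtain m where m: "length xs = Suc m" using assms by (cases xs) auto
  have "cyc_nth (rotate k xs) (p + m * k + j) = cyc_nth xs ((p + j) + k * length xs)" for j
    using assms by (simp add: cyc_nth_rotate m algebra_simps)
  then have "cyc_nth (rotate k xs) (p + m * k + j) = cyc_nth xs (p + j)" for j
    by (simp add: cyc_nth_def)
  then show ?thesis using that by blast
qed

lemma cyc_nth_eq_shift:
  assumes "distinct xs" "xs \<noteq> []" "cyc_nth xs i = cyc_nth xs j"
  shows "cyc_nth xs (i + c) = cyc_nth xs (j + c)"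
proof -
  have "i mod length xs = j mod length xs"
    using assms by (simp add: cyc_nth_def nth_eq_iff_index_eq)
  then show ?thesis by (metis cyc_nth_mod_add)
qed

lemma sorted_wrt_cyclic_successor:
  fixes f :: "'a \<Rightarrow> real"
  assumes sorted: "sorted_wrt (\<lambda>x y. f x < f y) xs" and i: "i < length xs"
    and y: "y \<in> set xs" "y \<noteq> xs ! i" "y \<noteq> cyc_nth xs (i + 1)"
  shows "cyclically_between (f (xs ! i)) (f (cyc_nth xs (i + 1))) (f y)"
proof -
  have less: "f (xs ! a) < f (xs ! b)" if "a < b" "b < length xs" for a b
    using sorted_wrt_nth_less[OF sorted that] .
  obtain m where m: "m < length xs" "y = xs ! m" using y(1) by (auto simp: in_set_conv_nth)
  show ?thesis
  proof (cases "i + 1 < length xs")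
    case True
    then have "cyc_nth xs (i + 1) = xs ! (i + 1)" by (simp add: cyc_nth_eq_nth)
    moreover have "m \<noteq> i" "m \<noteq> i + 1" using m y calculation by auto
    then have "m < i \<or> i + 1 < m" by linarith
    ultimately show ?thesis
      using less[of m i] less[of i "i + 1"] less[of "i + 1" m] True i m
      unfolding cyclically_between_def by auto
  next
    case False
    then have "i + 1 = length xs" using i by simp
    then have "cyc_nth xs (i + 1) = xs ! 0" by (simp add: cyc_nth_def)
    moreover have "m \<noteq> 0" "m \<noteq> i" using m y calculation by metis+
    then have "0 < m" "m < i" using m \<open>i + 1 = length xs\<close> by linarith+
    ultimately show ?thesis
      using less[of 0 m] less[of m i] i m unfolding cyclically_between_def by auto
  qed
qed

lemma tangent_sym: "tangent D E \<Longrightarrow> tangent E D"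
  by (auto simp: tangent_def norm_minus_commute)

lemma tangent_norm_ctr_diff: "tangent D E \<Longrightarrow> cmod (ctr E - ctr D) = rad D + rad E"
  by (simp add: tangent_def norm_minus_commute)

lemma tangent_ctr_neq:
  assumes "packing P" "D \<in> P" "E \<in> P" "tangent D E"
  shows "ctr E \<noteq> ctr D"
proof -
  have "rad D + rad E > 0" using assms(1-3) by (simp add: packing_def add_pos_pos)
  then show ?thesis using assms(4) by (auto simp: tangent_def)
qed

lemma corona_list_mem_iff: "corona_list P C L \<Longrightarrow> E \<in> set L \<longleftrightarrow> E \<in> P \<and> tangent C E"
  by (auto simp: corona_list_def corona_def)

lemma corona_list_distinct: "corona_list P C L \<Longrightarrow> distinct L"
  unfolding corona_list_def by (metis sorted_wrt_map strict_sorted_iff distinct_map)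

lemma corona_list_unique:
  assumes "corona_list P C L1" "corona_list P C L2"
  shows "L1 = L2"
proof -
  define f where "f E = Arg (ctr E - ctr C)" for E
  have sorted: "sorted_wrt (<) (map f L1)" "sorted_wrt (<) (map f L2)" and set: "set L1 = set L2"
    using assms by (auto simp: corona_list_def f_def sorted_wrt_map)
  then have "map f L1 = map f L2"
    by (metis list.set_map sorted_distinct_set_unique strict_sorted_iff)
  moreover have "inj_on f (set L1 \<union> set L2)"
    using sorted set by (simp add: strict_sorted_iff distinct_map)
  ultimately show ?thesis by (simp add: inj_on_map_eq_map)
qed

lemma has_coding_iff: "corona_list P C L \<Longrightarrow> has_coding P C w \<longleftrightarrow> cyclic_equiv (map rad L) w"
  unfolding has_coding_def using corona_list_unique by blast

lemma compact_packing_corona: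
  assumes "compact_packing P" "C \<in> P"
  obtains L where "corona_list P C L" "L \<noteq> []"
    "\<And>i. tangent (cyc_nth L i) (cyc_nth L (i + 1))"
    "\<And>i. ccw (ctr C) (ctr (cyc_nth L i)) (ctr (cyc_nth L (i + 1)))"
proof -
  obtain L where L: "corona_list P C L" "L \<noteq> []"
    and cycle: "\<And>i. i < length L \<Longrightarrow> tangent (L ! i) (L ! ((i + 1) mod length L)) \<and>
        ccw (ctr C) (ctr (L ! i)) (ctr (L ! ((i + 1) mod length L)))"
    using assms unfolding compact_packing_def ccw_def by blast
  have "tangent (cyc_nth L i) (cyc_nth L (i + 1)) \<and>
      ccw (ctr C) (ctr (cyc_nth L i)) (ctr (cyc_nth L (i + 1)))" for i
    using cycle[of "i mod length L"] L(2) by (simp add: cyc_nth_def mod_Suc_eq)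
  with L that show ?thesis by blast
qed

lemma corona_list_successor:
  assumes pk: "packing P" and mem: "C \<in> P" "X \<in> P" "Y \<in> P"
    and tangent: "tangent C X" "tangent C Y" "tangent X Y" and orient: "ccw (ctr C) (ctr X) (ctr Y)"
    and L: "corona_list P C L"
    and radii: "\<forall>G\<in>P. s \<le> rad G" "rad C = s" "rad X = s \<or> rad Y = s"
  obtains i where "cyc_nth L i = X" "cyc_nth L (i + 1) = Y"
proof -
  define f where "f E = Arg (ctr E - ctr C)" for E
  have "X \<in> set L" using L mem tangent by (simp add: corona_list_mem_iff)
  then obtain i where i: "i < length L" "L ! i = X" by (metis in_set_conv_nth)
  define G where "G = cyc_nth L (i + 1)"
  have "L \<noteq> []" using i by auto
  then have G: "G \<in> P" "tangent C G"
    using cyc_nth_in_set[of L "i + 1"] L by (simp_all add: G_def corona_list_mem_iff)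
  show ?thesis
  proof (cases "G = Y")
    case True
    then show ?thesis using that[of i] i by (simp add: G_def cyc_nth_eq_nth)
  next
    case False
    have ctr_neq: "ctr E \<noteq> ctr C" if "E \<in> P" "tangent C E" for E
      using tangent_ctr_neq[OF pk mem(1) that] .
    have sorted: "sorted_wrt (\<lambda>E F. f E < f F) L"
      using L by (simp add: corona_list_def f_def)
    have "Y \<in> set L" using L mem tangent by (simp add: corona_list_mem_iff)
    moreover have "Y \<noteq> L ! i" using tangent(3) i by (auto simp: tangent_def)
    ultimately have between: "cyclically_between (f X) (f G) (f Y)"
      using sorted_wrt_cyclic_successor[OF sorted i(1)] False i by (simp add: G_def)
    have bounds: "-pi < f E" "f E \<le> pi" for E
      using Arg_bounded by (simp_all add: f_def)
    have "sin (f Y - f X) > 0"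
      using orient ctr_neq mem tangent by (simp add: f_def ccw_iff_sin_Arg)
    then have "sin (f G - f X) > 0 \<and> sin (f Y - f G) > 0"
      using sin_pos_cyclically_between[OF bounds bounds bounds _ between] by blast
    then have "ccw (ctr C) (ctr X) (ctr G)" "ccw (ctr C) (ctr G) (ctr Y)"
      using ctr_neq G mem tangent by (simp_all add: f_def ccw_iff_sin_Arg)
    moreover have "G \<noteq> X" using calculation(1) ccw_irrefl by blast
    moreover have "cmod (ctr G - ctr X) \<ge> rad G + rad X" "cmod (ctr G - ctr Y) \<ge> rad G + rad Y"
      using pk G mem \<open>G \<noteq> X\<close> False by (auto simp: packing_def)
    moreover have "rad C > 0" "rad X > 0" "rad Y > 0"
      using pk mem by (auto simp: packing_def)
    moreover have "rad C \<le> rad G" "rad X \<le> rad G \<or> rad Y \<le> rad G"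
      using radii G by auto
    moreover have XY: "cmod (ctr X - ctr Y) = rad X + rad Y"
      using tangent(3) by (simp add: tangent_def)
    ultimately show ?thesis
      using tangent_triangle_no_disc_in_sector[OF tangent_norm_ctr_diff[OF tangent(1)]
          tangent_norm_ctr_diff[OF tangent(2)] XY
          tangent_norm_ctr_diff[OF G(2)]] orient by blast
  qed
qed

section \<open>Codings\<close>

lemma not_has_coding_all_s:
  assumes "E \<in> P" "tangent C E" "rad E \<noteq> s"
  shows "\<not> has_coding P C [s, s, s, s, s, s]"
proof
  assume "has_coding P C [s, s, s, s, s, s]"
  then obtain L k where L: "corona_list P C L" and
    "map rad L = rotate k [s, s, s, s, s, s] \<or> map rad L = rotate k (rev [s, s, s, s, s, s])"
    by (auto simp: has_coding_def cyclic_equiv_def)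
  then have "set (map rad L) = {s}" by auto
  moreover have "E \<in> set L" using L assms(1,2) by (simp add: corona_list_mem_iff)
  ultimately show False using assms(3) by auto
qed

lemma ss_windows_of_word:
  fixes r s :: real
  assumes w: "w \<in> {[1, r, s, s], [1, 1, r, s, s], [1, r, r, s, s], [1, s, r, s, s]}"
    and u: "u \<in> {w, rev w}" and distinct: "s \<noteq> 1" "s \<noteq> r" "r \<noteq> 1"
  shows "\<exists>i. cyc_nth u (i + 1) = s \<and> cyc_nth u (i + 2) = s"
    and "i < length u \<Longrightarrow> cyc_nth u (i + 1) = s \<Longrightarrow> cyc_nth u (i + 2) = s \<Longrightarrow>
      {cyc_nth u i, cyc_nth u (i + 3)} = {1, r}"
proof -
  from w u have words: "u = [1, r, s, s] \<or> u = [1, 1, r, s, s] \<or> u = [1, r, r, s, s] \<or> u = [1, s, r, s, s] \<or>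
      u = [s, s, r, 1] \<or> u = [s, s, r, 1, 1] \<or> u = [s, s, r, r, 1] \<or> u = [s, s, r, s, 1]"
    by auto
  have "\<exists>i\<in>{0, 1, 2, 3, 4}. cyc_nth u (i + 1) = s \<and> cyc_nth u (i + 2) = s"
    using words by (elim disjE) (simp_all add: cyc_nth_def)
  then show "\<exists>i. cyc_nth u (i + 1) = s \<and> cyc_nth u (i + 2) = s" by blast
  assume "i < length u" "cyc_nth u (i + 1) = s" "cyc_nth u (i + 2) = s"
  moreover have "length u \<le> 5" using words by auto
  ultimately have "i = 0 \<or> i = 1 \<or> i = 2 \<or> i = 3 \<or> i = 4" by linarith
  with words \<open>cyc_nth u (i + 1) = s\<close> \<open>cyc_nth u (i + 2) = s\<close> distinct
  show "{cyc_nth u i, cyc_nth u (i + 3)} = {1, r}"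
    by (elim disjE) (auto simp: cyc_nth_def)
qed

lemma cyclic_equiv_ss_windows:
  fixes r s :: real
  assumes w: "w \<in> {[1, r, s, s], [1, 1, r, s, s], [1, r, r, s, s], [1, s, r, s, s]}"
    and v: "cyclic_equiv v w" and distinct: "s \<noteq> 1" "s \<noteq> r" "r \<noteq> 1"
  shows "\<exists>i. cyc_nth v (i + 1) = s \<and> cyc_nth v (i + 2) = s"
    and "cyc_nth v (i + 1) = s \<Longrightarrow> cyc_nth v (i + 2) = s \<Longrightarrow> {cyc_nth v i, cyc_nth v (i + 3)} = {1, r}"
proof -
  obtain k u where vu: "v = rotate k u" and u: "u \<in> {w, rev w}"
    using v by (auto simp: cyclic_equiv_def)
  have "u \<noteq> []" using w u by auto
  note windows = ss_windows_of_word[OF w u distinct]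
  obtain p where "cyc_nth u (p + 1) = s" "cyc_nth u (p + 2) = s"
    using windows(1) by blast
  moreover obtain i' where "\<And>j. cyc_nth v (i' + j) = cyc_nth u (p + j)"
    using cyc_nth_rotate_shift[OF \<open>u \<noteq> []\<close>] vu by metis
  ultimately show "\<exists>i. cyc_nth v (i + 1) = s \<and> cyc_nth v (i + 2) = s" by metis
  define m where "m = (i + k) mod length u"
  have shift: "cyc_nth v (i + c) = cyc_nth u (m + c)" for c
  proof -
    have "cyc_nth v (i + c) = cyc_nth u (i + k + c)"
      using \<open>u \<noteq> []\<close> by (simp add: vu cyc_nth_rotate algebra_simps)
    then show ?thesis by (simp only: m_def cyc_nth_mod_add)
  qed
  have "m < length u" using \<open>u \<noteq> []\<close> by (simp add: m_def)
  assume "cyc_nth v (i + 1) = s" "cyc_nth v (i + 2) = s"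
  then have "{cyc_nth u m, cyc_nth u (m + 3)} = {1, r}"
    using windows(2)[OF \<open>m < length u\<close>] by (simp only: shift)
  moreover have "cyc_nth v i = cyc_nth u m" using shift[of 0] by simp
  ultimately show "{cyc_nth v i, cyc_nth v (i + 3)} = {1, r}" by (simp only: shift)
qed

lemma corona_ss_windows:
  fixes r s :: real
  assumes w: "w \<in> {[1, r, s, s], [1, 1, r, s, s], [1, r, r, s, s], [1, s, r, s, s]}"
    and L: "corona_list P C L" "L \<noteq> []" and coded: "has_coding P C w"
    and distinct: "s \<noteq> 1" "s \<noteq> r" "r \<noteq> 1"
  shows "\<exists>i. rad (cyc_nth L (i + 1)) = s \<and> rad (cyc_nth L (i + 2)) = s"
    and "rad (cyc_nth L (i + 1)) = s \<Longrightarrow> rad (cyc_nth L (i + 2)) = s \<Longrightarrow>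
      {rad (cyc_nth L i), rad (cyc_nth L (i + 3))} = {1, r}"
proof -
  have "cyclic_equiv (map rad L) w" using coded L(1) by (simp add: has_coding_iff)
  note windows = cyclic_equiv_ss_windows[OF w this distinct, unfolded cyc_nth_map[OF L(2)]]
  show "\<exists>i. rad (cyc_nth L (i + 1)) = s \<and> rad (cyc_nth L (i + 2)) = s"
    by (rule windows(1))
  show "rad (cyc_nth L (i + 1)) = s \<Longrightarrow> rad (cyc_nth L (i + 2)) = s \<Longrightarrow>
      {rad (cyc_nth L i), rad (cyc_nth L (i + 3))} = {1, r}"
    by (rule windows(2))
qed

lemma compact_packing_predecessor:
  assumes "compact_packing P" "C \<in> P" "U \<in> P" "tangent C U"
  obtains X where "X \<in> P" "tangent C X" "tangent X U" "ccw (ctr C) (ctr X) (ctr U)"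
proof -
  obtain L where L: "corona_list P C L" "L \<noteq> []"
    and cycle: "\<And>i. tangent (cyc_nth L i) (cyc_nth L (i + 1))"
      "\<And>i. ccw (ctr C) (ctr (cyc_nth L i)) (ctr (cyc_nth L (i + 1)))"
    using compact_packing_corona[OF assms(1,2)] by metis
  have "U \<in> set L" using L assms(3,4) by (simp add: corona_list_mem_iff)
  then obtain i where "i < length L" "cyc_nth L i = U"
    by (metis in_set_conv_nth cyc_nth_eq_nth)
  moreover have "i + length L - 1 + 1 = i + length L" using L(2) by simp
  ultimately have "cyc_nth L (i + length L - 1 + 1) = U" by (simp add: cyc_nth_add_length)
  moreover have "cyc_nth L (i + length L - 1) \<in> P" "tangent C (cyc_nth L (i + length L - 1))"
    using cyc_nth_in_set[OF L(2)] L(1) by (simp_all add: corona_list_mem_iff)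
  ultimately show ?thesis using that cycle by metis
qed

locale compact_packing_1rs =
  fixes P :: "disc set" and r s :: real
  assumes radius_order: "0 < s" "s < r" "r < 1"
    and compact: "compact_packing P"
    and radii: "\<forall>E\<in>P. rad E \<in> {1, r, s}"
begin

lemma radii_distinct: "s \<noteq> 1" "s \<noteq> r" "r \<noteq> 1"
  using radius_order by simp_all

lemma packing: "packing P"
  using compact by (simp add: compact_packing_def)

lemma rad_ge: "\<forall>E\<in>P. s \<le> rad E"
  using radii radius_order by force

text \<open>Around C the corona reads E, U, V, F, so the coding forces the s-pair U, V
  to be flanked by a 1-disc and an r-disc.\<close>

lemma ss_triangle_flank:
  assumes w: "w \<in> {[1, r, s, s], [1, 1, r, s, s], [1, r, r, s, s], [1, s, r, s, s]}"
    and coded: "has_coding P C w"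
    and mem: "C \<in> P" "U \<in> P" "V \<in> P" "E \<in> P" "F \<in> P"
    and small: "rad C = s" "rad U = s" "rad V = s"
    and triangle: "tangent C U" "tangent C V" "tangent U V" "ccw (ctr C) (ctr U) (ctr V)"
    and before: "tangent C E" "tangent E U" "ccw (ctr C) (ctr E) (ctr U)"
    and after: "tangent C F" "tangent V F" "ccw (ctr C) (ctr V) (ctr F)"
  shows "{rad E, rad F} = {1, r}"
proof -
  obtain L where L: "corona_list P C L" "L \<noteq> []"
    using compact_packing_corona[OF compact mem(1)] by metis
  have distinct: "distinct L" using L(1) by (rule corona_list_distinct)
  obtain i where i: "cyc_nth L i = E" "cyc_nth L (i + 1) = U"
    using corona_list_successor[OF packing mem(1,4,2) before(1) triangle(1) before(2,3) L(1) rad_ge]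
      small by metis
  obtain j where j: "cyc_nth L j = U" "cyc_nth L (j + 1) = V"
    using corona_list_successor[OF packing mem(1-3) triangle L(1) rad_ge] small by metis
  obtain k where k: "cyc_nth L k = V" "cyc_nth L (k + 1) = F"
    using corona_list_successor[OF packing mem(1,3,5) triangle(2) after L(1) rad_ge] small by metis
  have "cyc_nth L (i + 2) = V"
    using cyc_nth_eq_shift[OF distinct L(2), of "i + 1" j 1] i j by simp
  moreover have "cyc_nth L (i + 3) = F"
    using cyc_nth_eq_shift[OF distinct L(2), of "i + 2" k 1] calculation k by (simp add: numeral_3_eq_3)
  ultimately show ?thesis
    using corona_ss_windows(2)[OF w L coded radii_distinct, of i] i small by simp
qed

lemma ss_pair_not_both_coded:
  assumes w: "w \<in> {[1, r, s, s], [1, 1, r, s, s], [1, r, r, s, s], [1, s, r, s, s]}"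
    and D: "D \<in> P" "rad D = s" "has_coding P D w" and L: "corona_list P D L"
    and window: "rad (cyc_nth L (j + 1)) = s" "rad (cyc_nth L (j + 2)) = s"
  shows "\<not> (has_coding P (cyc_nth L (j + 1)) w \<and> has_coding P (cyc_nth L (j + 2)) w)"
proof
  assume coded: "has_coding P (cyc_nth L (j + 1)) w \<and> has_coding P (cyc_nth L (j + 2)) w"
  obtain L' where L': "corona_list P D L'" "L' \<noteq> []"
    and cycle: "\<And>i. tangent (cyc_nth L' i) (cyc_nth L' (i + 1))"
      "\<And>i. ccw (ctr D) (ctr (cyc_nth L' i)) (ctr (cyc_nth L' (i + 1)))"
    using compact_packing_corona[OF compact D(1)] by metis
  have "L' = L" using L'(1) L by (rule corona_list_unique)
  then have nonempty: "L \<noteq> []" using L'(2) by simp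
  define A S1 S2 B where "A = cyc_nth L j" and "S1 = cyc_nth L (j + 1)"
    and "S2 = cyc_nth L (j + 2)" and "B = cyc_nth L (j + 3)"
  have "cyc_nth L i \<in> P \<and> tangent D (cyc_nth L i)" for i
    using cyc_nth_in_set[OF nonempty] L by (simp add: corona_list_mem_iff)
  then have mem: "A \<in> P" "S1 \<in> P" "S2 \<in> P" "B \<in> P"
    and spokes: "tangent D A" "tangent D S1" "tangent D S2" "tangent D B"
    by (simp_all add: A_def S1_def S2_def B_def)
  have rim: "tangent A S1" "tangent S1 S2" "tangent S2 B"
    and orient: "ccw (ctr D) (ctr A) (ctr S1)" "ccw (ctr D) (ctr S1) (ctr S2)" "ccw (ctr D) (ctr S2) (ctr B)"
    using cycle[of j] cycle[of "j + 1"] cycle[of "j + 2"]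
    by (simp_all add: \<open>L' = L\<close> A_def S1_def S2_def B_def numeral_3_eq_3)
  have small: "rad D = s" "rad S1 = s" "rad S2 = s"
    using D(2) window by (simp_all add: S1_def S2_def)
  have "{rad A, rad B} = {1, r}"
    using corona_ss_windows(2)[OF w L nonempty D(3) radii_distinct] window
    by (simp add: A_def B_def)
  obtain X where X: "X \<in> P" "tangent S1 X" "tangent X S2" "ccw (ctr S1) (ctr X) (ctr S2)"
    using compact_packing_predecessor[OF compact mem(2,3) rim(2)] by metis
  have "{rad X, rad A} = {1, r}"
    by (rule ss_triangle_flank[OF w _ mem(2,3) D(1) X(1) mem(1) small(2,3,1)])
      (use coded rim spokes orient X in \<open>auto simp: S1_def intro: tangent_sym ccw_rotate[THEN iffD1]\<close>)
  moreover have "{rad B, rad X} = {1, r}"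
    by (rule ss_triangle_flank[OF w _ mem(3) D(1) mem(2,4) X(1) small(3,1,2)])
      (use coded rim spokes orient X in \<open>auto simp: S2_def intro: tangent_sym ccw_rotate[THEN iffD1]\<close>)
  ultimately show False
    using \<open>{rad A, rad B} = {1, r}\<close> radii_distinct by (auto simp: doubleton_eq_iff)
qed

end

theorem lemma4:
  fixes P :: "disc set" and r s :: real and w :: "real list" and D :: disc
  assumes "0 < s" and "s < r" and "r < 1"
    and "compact_packing P"
    and "\<forall>E\<in>P. rad E \<in> {1, r, s}"
    and "w \<in> {[1, r, s, s], [1, 1, r, s, s], [1, r, r, s, s], [1, s, r, s, s]}"
    and "D \<in> P" and "rad D = s" and "has_coding P D w"
  shows "\<exists>D'\<in>P. rad D' = s \<and> \<not> has_coding P D' w \<and> \<not> has_coding P D' [s, s, s, s, s, s]"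
proof -
  interpret compact_packing_1rs P r s
    using assms(1-5) by unfold_locales
  obtain L where L: "corona_list P D L" "L \<noteq> []"
    and cycle: "\<And>i. tangent (cyc_nth L i) (cyc_nth L (i + 1))"
    using compact_packing_corona[OF compact assms(7)] by metis
  have mem: "cyc_nth L i \<in> P" for i
    using cyc_nth_in_set[OF L(2)] L(1) by (simp add: corona_list_mem_iff)
  obtain j where window: "rad (cyc_nth L (j + 1)) = s" "rad (cyc_nth L (j + 2)) = s"
    using corona_ss_windows(1)[OF assms(6) L assms(9) radii_distinct] by metis
  then have "{rad (cyc_nth L j), rad (cyc_nth L (j + 3))} = {1, r}"
    using corona_ss_windows(2)[OF assms(6) L assms(9) radii_distinct] by simp
  then have "rad (cyc_nth L j) \<noteq> s" "rad (cyc_nth L (j + 3)) \<noteq> s"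
    using radii_distinct by (auto simp: doubleton_eq_iff)
  moreover have "tangent (cyc_nth L (j + 1)) (cyc_nth L j)"
    using cycle[of j] by (rule tangent_sym)
  moreover have "tangent (cyc_nth L (j + 2)) (cyc_nth L (j + 3))"
    using cycle[of "j + 2"] by (simp add: numeral_3_eq_3)
  ultimately have "\<not> has_coding P (cyc_nth L (j + 1)) [s, s, s, s, s, s]"
    "\<not> has_coding P (cyc_nth L (j + 2)) [s, s, s, s, s, s]"
    using not_has_coding_all_s[OF mem] by blast+
  then show ?thesis
    using ss_pair_not_both_coded[OF assms(6-9) L(1) window] window mem by blast
qed

end
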